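(* In the oceanic model under the proportional reward sharing scheme, the Price of Stability equals $1$, for every stake distribution of the atomic players and every total mass $L\ge 0$ of non-atomic players (in particular also in the purely atomic model $L=0$).
   Context: Oceanic model: a finite set $N_a$ of atomic players, player $i$ having stake $a_i>0$, and a continuum of non-atomic players of total mass $L\ge 0$ (a measurable set of them contributes stake equal to its measure). Threshold $h>0$, and $a_i<h$ for every atomic player. Each player opens her own pool or joins one; pools partition all players. A pool $S$ has stake $m(S)$ (non-atomic mass plus atomic stakes in $S$) and reward $\rho(S)=1$ if $m(S)\ge h$ (winning), else $0$. Proportional scheme: an atomic player $i$ in pool $C$ receives $\frac{a_i}{m(C)}\rho(C)$, and non-atomic players in $C$ receive $\rho(C)/m(C)$ per unit of stake. A partition into winning pools is a Nash equilibrium if no atomic player can strictly increase her payment by moving to another pool of the partition or opening a new pool alone, and no non-atomic player can strictly increase her per-unit reward by moving to another pool (a non-atomic player is infinitesimal, so her move does not change the per-unit reward of the pool she joins). $OPT(G)$ is the maximum number of pools of stake at least $h$ in a partition of all players (games are considered with total stake at least $h$); $W(\Pi)$ is the number of winning pools of $\Pi$; the Price of Stability is $\min_\Pi OPT(G)/W(\Pi)$ over Nash equilibrium partitions. *)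

theory Defs
  imports Complex_Main
begin

text \<open>Atomic players form a finite set N with stakes a; the
non-atomic players have total mass L. A partition is represented by a finite
set P of pool labels, an assignment sigma of atomic players to pools, and the
non-atomic mass ell p placed in each pool p (nonnegative, summing to L).\<close>

definition valid_partition ::
  "'a set \<Rightarrow> real \<Rightarrow> nat set \<Rightarrow> ('a \<Rightarrow> nat) \<Rightarrow> (nat \<Rightarrow> real) \<Rightarrow> bool" where
  "valid_partition N L P \<sigma> ell \<longleftrightarrow>
     finite P \<and> (\<forall>i\<in>N. \<sigma> i \<in> P) \<and> (\<forall>p\<in>P. 0 \<le> ell p) \<and> sum ell P = L"

definition pool_stake ::
  "'a set \<Rightarrow> ('a \<Rightarrow> real) \<Rightarrow> ('a \<Rightarrow> nat) \<Rightarrow> (nat \<Rightarrow> real) \<Rightarrow> nat \<Rightarrow> real" where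
  "pool_stake N a \<sigma> ell p = ell p + (\<Sum>i\<in>{i\<in>N. \<sigma> i = p}. a i)"

definition rho :: "real \<Rightarrow> real \<Rightarrow> real" where
  "rho h x = (if h \<le> x then 1 else 0)"

definition num_winning ::
  "'a set \<Rightarrow> ('a \<Rightarrow> real) \<Rightarrow> real \<Rightarrow> nat set \<Rightarrow> ('a \<Rightarrow> nat) \<Rightarrow> (nat \<Rightarrow> real) \<Rightarrow> nat" where
  "num_winning N a h P \<sigma> ell = card {p\<in>P. h \<le> pool_stake N a \<sigma> ell p}"

definition OPT :: "'a set \<Rightarrow> ('a \<Rightarrow> real) \<Rightarrow> real \<Rightarrow> real \<Rightarrow> nat" where
  "OPT N a L h = Max {num_winning N a h P \<sigma> ell | P \<sigma> ell. valid_partition N L P \<sigma> ell}"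

definition is_NE ::
  "'a set \<Rightarrow> ('a \<Rightarrow> real) \<Rightarrow> real \<Rightarrow> real \<Rightarrow> nat set \<Rightarrow> ('a \<Rightarrow> nat) \<Rightarrow> (nat \<Rightarrow> real) \<Rightarrow> bool" where
  "is_NE N a L h P \<sigma> ell \<longleftrightarrow>
     (let m = pool_stake N a \<sigma> ell in
       valid_partition N L P \<sigma> ell \<and>
       (\<forall>p\<in>P. h \<le> m p) \<and>
       (\<forall>i\<in>N. \<forall>q\<in>P. q \<noteq> \<sigma> i \<longrightarrow>
          a i * rho h (m q + a i) / (m q + a i) \<le> a i * rho h (m (\<sigma> i)) / m (\<sigma> i)) \<and>
       (\<forall>i\<in>N. a i * rho h (a i) / a i \<le> a i * rho h (m (\<sigma> i)) / m (\<sigma> i)) \<and>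
       (\<forall>p\<in>P. 0 < ell p \<longrightarrow>
          (\<forall>q\<in>P. rho h (m q) / m q \<le> rho h (m p) / m p)))"

end

theory Submission
  imports Defs "HOL-Library.FuncSet"
begin

(* An equilibrium consists of winning pools only, so it has at most OPT of them; the point is
   to find one with exactly OPT. Merging the losing pools of an optimal partition into a winning
   one assigns the atomic players to OPT pools in such a way that the non-atomic mass can be
   spread to make all of them win. Among all such assignments pick one minimising the sum of
   squared atomic loads, and spread the non-atomic mass by water filling, so that it only sits
   in pools of least stake m. Then every pool wins, an atomic player alone cannot reach h, and
   non-atomic players are already in least-staked pools. If an atomic player i gained by moving
   from p to q, i.e. m p > m q + a i, then p holds no non-atomic mass, every pool still wins
   after the move, and the move lowers the potential by 2 a i (load p - load q - a i) > 0. *)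

lemma water_level_exists:
  fixes A :: "'b \<Rightarrow> real"
  assumes "finite K" and "K \<noteq> {}" and "\<forall>p\<in>K. 0 \<le> A p" and "0 \<le> L"
  shows "\<exists>t. (\<Sum>p\<in>K. max 0 (t - A p)) = L"
proof -
  define g where "g t = (\<Sum>p\<in>K. max 0 (t - A p))" for t
  obtain p0 where p0: "p0 \<in> K" using assms(2) by blast
  have "g 0 = 0" unfolding g_def by (rule sum.neutral) (use assms(3) in auto)
  moreover have "max 0 (L + A p0 - A p0) \<le> g (L + A p0)"
    unfolding g_def by (rule member_le_sum) (use p0 assms(1) in auto)
  moreover have "\<forall>x. isCont g x" unfolding g_def by (auto intro!: continuous_intros)
  ultimately obtain t where "g t = L"
    using IVT[of g 0 L "L + A p0"] assms(3,4) p0 by force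
  then show ?thesis unfolding g_def by blast
qed

lemma water_level_feasible:
  fixes A ell0 :: "'b \<Rightarrow> real"
  assumes "finite K" and "\<forall>p\<in>K. 0 \<le> ell0 p" and "sum ell0 K = L"
    and "\<forall>p\<in>K. h \<le> A p + ell0 p"
    and level: "(\<Sum>p\<in>K. max 0 (t - A p)) = L" and "p \<in> K"
  shows "h \<le> max (A p) t"
proof (rule ccontr)
  assume "\<not> h \<le> max (A p) t"
  then have th: "t < h" and ph: "A p < h" by auto
  define S where "S = {p\<in>K. A p < h}"
  have S: "finite S" "S \<subseteq> K" "p \<in> S" using assms(1,6) ph unfolding S_def by auto
  have "L = (\<Sum>q\<in>S. max 0 (t - A q))"
    unfolding level[symmetric] using assms(1) th by (intro sum.mono_neutral_right) (auto simp: S_def)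
  also have "\<dots> < (\<Sum>q\<in>S. h - A q)"
    by (rule sum_strict_mono_ex1) (use S th ph in \<open>auto simp: S_def\<close>)
  also have "\<dots> \<le> sum ell0 S"
    by (rule sum_mono) (use assms(4) in \<open>auto simp: S_def\<close>)
  also have "\<dots> \<le> sum ell0 K"
    by (rule sum_mono2) (use assms(1,2) S in auto)
  finally show False using assms(3) by simp
qed

lemma water_filling:
  fixes A ell0 :: "'b \<Rightarrow> real"
  assumes "finite K" and "K \<noteq> {}" and "\<forall>p\<in>K. 0 \<le> A p"
    and "\<forall>p\<in>K. 0 \<le> ell0 p" and "sum ell0 K = L" and "\<forall>p\<in>K. h \<le> A p + ell0 p"
  obtains ell where "\<forall>p\<in>K. 0 \<le> ell p" and "sum ell K = L" and "\<forall>p\<in>K. h \<le> A p + ell p"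
    and "\<forall>p\<in>K. 0 < ell p \<longrightarrow> (\<forall>q\<in>K. A p + ell p \<le> A q + ell q)"
proof -
  have "0 \<le> L" using assms(4,5) sum_nonneg by metis
  then obtain t where level: "(\<Sum>p\<in>K. max 0 (t - A p)) = L"
    using water_level_exists assms(1-3) by blast
  define ell where "ell p = max 0 (t - A p)" for p
  have stake: "A p + ell p = max (A p) t" for p unfolding ell_def by linarith
  show thesis
  proof
    show "\<forall>p\<in>K. 0 \<le> ell p" and "sum ell K = L" using level unfolding ell_def by auto
    show "\<forall>p\<in>K. h \<le> A p + ell p"
      unfolding stake using water_level_feasible[OF assms(1,4-6) level] by blast
    show "\<forall>p\<in>K. 0 < ell p \<longrightarrow> (\<forall>q\<in>K. A p + ell p \<le> A q + ell q)"
      unfolding stake unfolding ell_def by auto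
  qed
qed

lemma sum_squares_transfer:
  fixes f g :: "'b \<Rightarrow> real"
  assumes "finite W" and "p \<in> W" and "q \<in> W" and "p \<noteq> q"
    and "\<And>r. g r = f r - (if r = p then x else 0) + (if r = q then x else 0)"
  shows "(\<Sum>r\<in>W. (g r)\<^sup>2) = (\<Sum>r\<in>W. (f r)\<^sup>2) + 2 * x * (f q - f p + x)"
proof -
  have "(g r)\<^sup>2 = (f r)\<^sup>2 + (if r = p then x\<^sup>2 - 2 * x * f p else 0)
      + (if r = q then x\<^sup>2 + 2 * x * f q else 0)" for r
    unfolding assms(5) using assms(4) by (auto simp: power2_eq_square algebra_simps)
  then show ?thesis
    using assms(1-3) by (simp add: sum.distrib power2_eq_square algebra_simps)
qed

lemma sum_pool_stake:
  assumes "valid_partition N L P \<sigma> ell" and "finite N"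
  shows "sum (pool_stake N a \<sigma> ell) P = L + sum a N"
proof -
  have P: "finite P" "\<sigma> ` N \<subseteq> P" "sum ell P = L"
    using assms(1) unfolding valid_partition_def by auto
  have "(\<Sum>p\<in>P. \<Sum>i\<in>{i\<in>N. \<sigma> i = p}. a i) = sum a N"
    using sum.group[OF assms(2) P(1,2), of a] by simp
  then show ?thesis unfolding pool_stake_def using P(3) by (simp add: sum.distrib)
qed

lemma num_winning_mult_le:
  assumes "valid_partition N L P \<sigma> ell" and "finite N" and "\<forall>i\<in>N. 0 \<le> a i"
  shows "real (num_winning N a h P \<sigma> ell) * h \<le> L + sum a N"
proof -
  have P: "finite P" "\<forall>p\<in>P. 0 \<le> ell p" using assms(1) unfolding valid_partition_def by auto
  have "\<forall>p\<in>P. 0 \<le> pool_stake N a \<sigma> ell p"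
    unfolding pool_stake_def using P(2) assms(3) by (auto intro!: add_nonneg_nonneg sum_nonneg)
  then have "real (card {p\<in>P. h \<le> pool_stake N a \<sigma> ell p}) * h
      \<le> sum (pool_stake N a \<sigma> ell) {p\<in>P. h \<le> pool_stake N a \<sigma> ell p}"
    by (intro sum_bounded_below) auto
  also have "\<dots> \<le> sum (pool_stake N a \<sigma> ell) P"
    using P(1) \<open>\<forall>p\<in>P. 0 \<le> pool_stake N a \<sigma> ell p\<close> by (intro sum_mono2) auto
  finally show ?thesis unfolding num_winning_def sum_pool_stake[OF assms(1,2)] .
qed

lemma finite_num_winning_values:
  assumes "finite N" and "\<forall>i\<in>N. 0 \<le> a i" and "0 < h"
  shows "finite {num_winning N a h P \<sigma> ell | P \<sigma> ell. valid_partition N L P \<sigma> ell}"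
proof (rule finite_subset)
  show "{num_winning N a h P \<sigma> ell | P \<sigma> ell. valid_partition N L P \<sigma> ell}
      \<subseteq> {..nat \<lceil>(L + sum a N) / h\<rceil>}"
  proof clarify
    fix P \<sigma> ell assume "valid_partition N L P \<sigma> ell"
    then have "real (num_winning N a h P \<sigma> ell) \<le> (L + sum a N) / h"
      using num_winning_mult_le[OF _ assms(1,2)] assms(3) by (simp add: field_simps)
    then show "num_winning N a h P \<sigma> ell \<le> nat \<lceil>(L + sum a N) / h\<rceil>" by linarith
  qed
qed simp

lemma valid_partition_single_pool:
  assumes "0 \<le> L"
  shows "valid_partition N L {0} (\<lambda>_. 0) (\<lambda>_. L)"
  using assms unfolding valid_partition_def by simp

lemma num_winning_le_OPT:
  assumes "valid_partition N L P \<sigma> ell"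
    and "finite N" and "\<forall>i\<in>N. 0 \<le> a i" and "0 < h"
  shows "num_winning N a h P \<sigma> ell \<le> OPT N a L h"
  unfolding OPT_def using assms by (intro Max_ge finite_num_winning_values) auto

lemma OPT_attained:
  assumes "finite N" and "\<forall>i\<in>N. 0 \<le> a i" and "0 < h" and "0 \<le> L"
  obtains P \<sigma> ell where "valid_partition N L P \<sigma> ell" and "num_winning N a h P \<sigma> ell = OPT N a L h"
proof -
  have "OPT N a L h \<in> {num_winning N a h P \<sigma> ell | P \<sigma> ell. valid_partition N L P \<sigma> ell}"
    unfolding OPT_def using valid_partition_single_pool[OF assms(4)]
    by (intro Max_in finite_num_winning_values assms(1-3)) blast
  then show thesis using that by auto
qed

lemma OPT_pos:
  assumes "finite N" and "\<forall>i\<in>N. 0 \<le> a i" and "0 < h" and "0 \<le> L" and "h \<le> L + sum a N"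
  shows "0 < OPT N a L h"
proof -
  have "pool_stake N a (\<lambda>_. 0) (\<lambda>_. L) 0 = L + sum a N" unfolding pool_stake_def by simp
  then have "{p\<in>{0}. h \<le> pool_stake N a (\<lambda>_. 0) (\<lambda>_. L) p} = {0}" using assms(5) by auto
  then have "num_winning N a h {0} (\<lambda>_. 0) (\<lambda>_. L) = 1" unfolding num_winning_def by simp
  then show ?thesis
    using num_winning_le_OPT[OF valid_partition_single_pool assms(1-3)] assms(4) by fastforce
qed

lemma num_winning_eq_card_if_NE:
  assumes "is_NE N a L h P \<sigma> ell"
  shows "num_winning N a h P \<sigma> ell = card P"
  using assms unfolding is_NE_def Let_def num_winning_def by (metis (no_types, lifting) Collect_cong Collect_mem_eq)

lemma valid_partition_nonempty:
  assumes "valid_partition N L P \<sigma> ell" and "0 < L + sum a N"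
  shows "P \<noteq> {}"
  using assms unfolding valid_partition_def by auto

definition atomic_load :: "'a set \<Rightarrow> ('a \<Rightarrow> real) \<Rightarrow> ('a \<Rightarrow> nat) \<Rightarrow> nat \<Rightarrow> real" where
  "atomic_load N a \<sigma> p = (\<Sum>i\<in>{i\<in>N. \<sigma> i = p}. a i)"

lemma pool_stake_eq_atomic_load: "pool_stake N a \<sigma> ell p = atomic_load N a \<sigma> p + ell p"
  unfolding pool_stake_def atomic_load_def by simp

lemma atomic_load_nonneg: "\<forall>i\<in>N. 0 \<le> a i \<Longrightarrow> 0 \<le> atomic_load N a \<sigma> p"
  unfolding atomic_load_def by (auto intro: sum_nonneg)

lemma atomic_load_fun_upd:
  assumes "finite N" and "i \<in> N" and "\<sigma> i \<noteq> q"
  shows "atomic_load N a (\<sigma>(i := q)) r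
    = atomic_load N a \<sigma> r - (if r = \<sigma> i then a i else 0) + (if r = q then a i else 0)"
proof -
  have split: "atomic_load N a \<tau> r = (if \<tau> i = r then a i else 0) + (\<Sum>j\<in>N - {i}. if \<tau> j = r then a j else 0)"
    for \<tau> :: "'a \<Rightarrow> nat"
  proof -
    have "atomic_load N a \<tau> r = (\<Sum>j\<in>N. if \<tau> j = r then a j else 0)"
      unfolding atomic_load_def by (simp add: sum.inter_filter assms(1))
    also have "\<dots> = (if \<tau> i = r then a i else 0) + (\<Sum>j\<in>N - {i}. if \<tau> j = r then a j else 0)"
      by (rule sum.remove[OF assms(1,2)])
    finally show ?thesis .
  qed
  have "(\<Sum>j\<in>N - {i}. if (\<sigma>(i := q)) j = r then a j else 0) = (\<Sum>j\<in>N - {i}. if \<sigma> j = r then a j else 0)"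
    by (rule sum.cong) auto
  then show ?thesis using split[of \<sigma>] split[of "\<sigma>(i := q)"] assms(3) by auto
qed

definition load_potential :: "'a set \<Rightarrow> ('a \<Rightarrow> real) \<Rightarrow> nat set \<Rightarrow> ('a \<Rightarrow> nat) \<Rightarrow> real" where
  "load_potential N a W \<sigma> = (\<Sum>p\<in>W. (atomic_load N a \<sigma> p)\<^sup>2)"

lemma load_potential_fun_upd:
  assumes "finite N" and "finite W" and "i \<in> N" and "\<sigma> i \<in> W" and "q \<in> W" and "\<sigma> i \<noteq> q"
  shows "load_potential N a W (\<sigma>(i := q)) = load_potential N a W \<sigma>
    + 2 * a i * (atomic_load N a \<sigma> q - atomic_load N a \<sigma> (\<sigma> i) + a i)"
  unfolding load_potential_def
  by (rule sum_squares_transfer[OF assms(2,4,5,6)]) (rule atomic_load_fun_upd[where \<sigma> = \<sigma> and q = q, OF assms(1,3,6)])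

definition winnable :: "'a set \<Rightarrow> ('a \<Rightarrow> real) \<Rightarrow> real \<Rightarrow> real \<Rightarrow> nat set \<Rightarrow> ('a \<Rightarrow> nat) \<Rightarrow> bool" where
  "winnable N a L h W \<sigma> \<longleftrightarrow>
     (\<exists>ell. (\<forall>p\<in>W. 0 \<le> ell p) \<and> sum ell W = L \<and> (\<forall>p\<in>W. h \<le> atomic_load N a \<sigma> p + ell p))"

lemma winnable_fun_upd:
  assumes "finite N" and "i \<in> N" and "\<sigma> i \<noteq> q" and "q \<in> W" and "0 \<le> a i"
    and "\<forall>p\<in>W. 0 \<le> ell p" and "sum ell W = L" and "\<forall>p\<in>W. h \<le> atomic_load N a \<sigma> p + ell p"
    and "atomic_load N a \<sigma> q + ell q + a i < atomic_load N a \<sigma> (\<sigma> i) + ell (\<sigma> i)"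
  shows "winnable N a L h W (\<sigma>(i := q))"
  unfolding winnable_def
proof (intro exI conjI ballI)
  fix r assume "r \<in> W"
  then show "h \<le> atomic_load N a (\<sigma>(i := q)) r + ell r"
    unfolding atomic_load_fun_upd[where \<sigma> = \<sigma> and q = q, OF assms(1-3)] using assms(4,5,8,9) by force
qed (use assms(6,7) in auto)

lemma is_NE_if_balanced:
  assumes "valid_partition N L P \<sigma> ell" and "0 < h" and "\<forall>i\<in>N. 0 < a i \<and> a i < h"
    and win: "\<forall>p\<in>P. h \<le> pool_stake N a \<sigma> ell p"
    and atomic: "\<forall>i\<in>N. \<forall>q\<in>P. q \<noteq> \<sigma> i \<longrightarrow>
      pool_stake N a \<sigma> ell (\<sigma> i) \<le> pool_stake N a \<sigma> ell q + a i"
    and nonatomic: "\<forall>p\<in>P. 0 < ell p \<longrightarrow> (\<forall>q\<in>P. pool_stake N a \<sigma> ell p \<le> pool_stake N a \<sigma> ell q)"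
  shows "is_NE N a L h P \<sigma> ell"
  unfolding is_NE_def Let_def
proof (intro conjI ballI impI)
  let ?m = "pool_stake N a \<sigma> ell"
  have \<sigma>P: "\<sigma> i \<in> P" if "i \<in> N" for i using assms(1) that unfolding valid_partition_def by blast
  fix i assume i: "i \<in> N"
  have ai: "0 < a i" "a i < h" using assms(3) i by auto
  have m: "h \<le> ?m (\<sigma> i)" using win \<sigma>P[OF i] by blast
  then show "a i * rho h (a i) / a i \<le> a i * rho h (?m (\<sigma> i)) / ?m (\<sigma> i)"
    using ai assms(2) unfolding rho_def by simp
  fix q assume "q \<in> P" and "q \<noteq> \<sigma> i"
  then have "?m (\<sigma> i) \<le> ?m q + a i" and "h \<le> ?m q" using atomic win i by auto
  then have "a i / (?m q + a i) \<le> a i / ?m (\<sigma> i)"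
    using ai m assms(2) by (intro divide_left_mono) auto
  then show "a i * rho h (?m q + a i) / (?m q + a i) \<le> a i * rho h (?m (\<sigma> i)) / ?m (\<sigma> i)"
    using m \<open>h \<le> ?m q\<close> ai unfolding rho_def by simp
next
  let ?m = "pool_stake N a \<sigma> ell"
  fix p q assume "p \<in> P" "0 < ell p" "q \<in> P"
  then have "?m p \<le> ?m q" "h \<le> ?m p" using nonatomic win by auto
  then show "rho h (?m q) / ?m q \<le> rho h (?m p) / ?m p"
    unfolding rho_def using assms(2) by (simp add: frac_le)
qed (use assms(1) win in auto)

lemma stake_balanced_if_min_potential:
  assumes "finite N" and "\<forall>i\<in>N. 0 < a i" and "finite W" and "\<sigma> \<in> N \<rightarrow>\<^sub>E W"
    and min: "\<forall>\<tau>\<in>N \<rightarrow>\<^sub>E W. winnable N a L h W \<tau> \<longrightarrow> load_potential N a W \<sigma> \<le> load_potential N a W \<tau>"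
    and ell: "\<forall>p\<in>W. 0 \<le> ell p" "sum ell W = L" "\<forall>p\<in>W. h \<le> atomic_load N a \<sigma> p + ell p"
    and filled: "\<forall>p\<in>W. 0 < ell p \<longrightarrow> (\<forall>q\<in>W. atomic_load N a \<sigma> p + ell p \<le> atomic_load N a \<sigma> q + ell q)"
    and i: "i \<in> N" and q: "q \<in> W" "q \<noteq> \<sigma> i"
  shows "pool_stake N a \<sigma> ell (\<sigma> i) \<le> pool_stake N a \<sigma> ell q + a i"
proof (rule ccontr)
  let ?load = "atomic_load N a \<sigma>" and ?p = "\<sigma> i"
  have p: "?p \<in> W" "?p \<noteq> q" using assms(4) i q by auto
  have ai: "0 < a i" using assms(2) i by blast
  assume "\<not> pool_stake N a \<sigma> ell ?p \<le> pool_stake N a \<sigma> ell q + a i"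
  then have gain: "?load q + ell q + a i < ?load ?p + ell ?p"
    unfolding pool_stake_eq_atomic_load by simp
  \<comment> \<open>the potential sees only atomic loads, so the gain has to show up there\<close>
  have "\<not> 0 < ell ?p"
  proof
    assume "0 < ell ?p"
    then have "?load ?p + ell ?p \<le> ?load q + ell q" using filled p(1) q(1) by blast
    then show False using gain ai by simp
  qed
  then have "?load q + a i < ?load ?p" using gain ell(1) q(1) by fastforce
  then have "load_potential N a W (\<sigma>(i := q)) < load_potential N a W \<sigma>"
    unfolding load_potential_fun_upd[where \<sigma> = \<sigma> and q = q, OF assms(1,3) i p(1) q(1) p(2)]
    using ai by (simp add: mult_pos_neg)
  moreover have "winnable N a L h W (\<sigma>(i := q))"
    using winnable_fun_upd[OF assms(1) i p(2) q(1) _ ell gain] ai by simp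
  moreover have "\<sigma>(i := q) \<in> N \<rightarrow>\<^sub>E W" using assms(4) i q(1) by auto
  ultimately show False using min by (meson leD)
qed

lemma exists_NE_if_winnable:
  assumes "finite N" and "0 < h" and "\<forall>i\<in>N. 0 < a i \<and> a i < h"
    and "finite W" and "W \<noteq> {}" and "\<sigma>0 \<in> N \<rightarrow>\<^sub>E W" and "winnable N a L h W \<sigma>0"
  obtains \<sigma> ell where "is_NE N a L h W \<sigma> ell"
proof -
  define S where "S = {\<tau> \<in> N \<rightarrow>\<^sub>E W. winnable N a L h W \<tau>}"
  define \<sigma> where "\<sigma> = arg_min_on (load_potential N a W) S"
  have "finite S" "S \<noteq> {}" unfolding S_def using assms(1,4,6,7) by (auto simp: finite_PiE)
  then have "\<sigma> \<in> S" and min: "\<forall>\<tau>\<in>S. load_potential N a W \<sigma> \<le> load_potential N a W \<tau>"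
    unfolding \<sigma>_def using arg_min_if_finite[of S "load_potential N a W"] by (auto simp: not_less)
  then have \<sigma>: "\<sigma> \<in> N \<rightarrow>\<^sub>E W" "winnable N a L h W \<sigma>" unfolding S_def by auto
  have apos: "\<forall>i\<in>N. 0 \<le> a i" using assms(3) by auto
  obtain ell0 where "\<forall>p\<in>W. 0 \<le> ell0 p" "sum ell0 W = L" "\<forall>p\<in>W. h \<le> atomic_load N a \<sigma> p + ell0 p"
    using \<sigma>(2) unfolding winnable_def by blast
  then obtain ell where ell: "\<forall>p\<in>W. 0 \<le> ell p" "sum ell W = L" "\<forall>p\<in>W. h \<le> atomic_load N a \<sigma> p + ell p"
    and filled: "\<forall>p\<in>W. 0 < ell p \<longrightarrow> (\<forall>q\<in>W. atomic_load N a \<sigma> p + ell p \<le> atomic_load N a \<sigma> q + ell q)"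
    using water_filling[OF assms(4,5) _ _ _ \<open>\<forall>p\<in>W. h \<le> atomic_load N a \<sigma> p + ell0 p\<close>]
      atomic_load_nonneg[OF apos] by blast
  have "is_NE N a L h W \<sigma> ell"
  proof (rule is_NE_if_balanced[OF _ assms(2,3)])
    show "valid_partition N L W \<sigma> ell" unfolding valid_partition_def using assms(4) \<sigma>(1) ell by auto
    show "\<forall>i\<in>N. \<forall>q\<in>W. q \<noteq> \<sigma> i \<longrightarrow> pool_stake N a \<sigma> ell (\<sigma> i) \<le> pool_stake N a \<sigma> ell q + a i"
      using stake_balanced_if_min_potential[OF assms(1) _ assms(4) \<sigma>(1) _ ell filled] assms(3) min
      unfolding S_def by blast
  qed (use ell filled in \<open>simp_all add: pool_stake_eq_atomic_load\<close>)
  then show thesis by (rule that)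
qed

lemma winnable_optimal_assignment:
  assumes "finite N" and "\<forall>i\<in>N. 0 \<le> a i" and "0 < h" and "0 \<le> L" and "h \<le> L + sum a N"
  obtains W \<sigma> where "finite W" and "card W = OPT N a L h" and "\<sigma> \<in> N \<rightarrow>\<^sub>E W"
    and "winnable N a L h W \<sigma>"
proof -
  obtain P \<sigma>0 ell0 where v: "valid_partition N L P \<sigma>0 ell0"
    and opt: "num_winning N a h P \<sigma>0 ell0 = OPT N a L h"
    using OPT_attained[OF assms(1-4)] .
  define W where "W = {p\<in>P. h \<le> pool_stake N a \<sigma>0 ell0 p}"
  have P: "finite P" "\<forall>p\<in>P. 0 \<le> ell0 p" "sum ell0 P = L" using v unfolding valid_partition_def by auto
  have W: "finite W" "W \<subseteq> P" "card W = OPT N a L h"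
    using P(1) opt unfolding W_def num_winning_def by auto
  then obtain w0 where w0: "w0 \<in> W" using OPT_pos[OF assms] by fastforce
  define \<sigma> where "\<sigma> = restrict (\<lambda>i. if \<sigma>0 i \<in> W then \<sigma>0 i else w0) N"
  define ell where "ell p = ell0 p + (if p = w0 then sum ell0 (P - W) else 0)" for p
  have "winnable N a L h W \<sigma>"
    unfolding winnable_def
  proof (intro exI conjI ballI)
    show "0 \<le> ell p" if "p \<in> W" for p
      unfolding ell_def using that P(2) W(2) by (auto intro!: sum_nonneg add_nonneg_nonneg)
    have "sum ell W = sum ell0 W + sum ell0 (P - W)"
      unfolding ell_def using W(1) w0 by (simp add: sum.distrib)
    then show "sum ell W = L" using P(1,3) W(2) by (simp add: sum.subset_diff[of W P])
  next
    fix p assume "p \<in> W"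
    then have "h \<le> atomic_load N a \<sigma>0 p + ell0 p" unfolding W_def pool_stake_eq_atomic_load by simp
    moreover have "atomic_load N a \<sigma>0 p \<le> atomic_load N a \<sigma> p"
      unfolding atomic_load_def \<sigma>_def using assms(1,2) \<open>p \<in> W\<close> by (intro sum_mono2) auto
    moreover have "ell0 p \<le> ell p" unfolding ell_def using P(2) by (auto intro!: sum_nonneg)
    ultimately show "h \<le> atomic_load N a \<sigma> p + ell p" by linarith
  qed
  moreover have "\<sigma> \<in> N \<rightarrow>\<^sub>E W" unfolding \<sigma>_def using w0 by auto
  ultimately show thesis using that W by blast
qed

theorem theorem4p1:
  fixes N :: "'a set" and a :: "'a \<Rightarrow> real" and L h :: real
  assumes "finite N" and "0 < h" and "0 \<le> L"
    and "\<forall>i\<in>N. 0 < a i \<and> a i < h"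
    and "h \<le> L + sum a N"
  shows "(\<exists>P \<sigma> ell. is_NE N a L h P \<sigma> ell \<and>
             real (OPT N a L h) / real (num_winning N a h P \<sigma> ell) = 1)
       \<and> (\<forall>P \<sigma> ell. is_NE N a L h P \<sigma> ell \<longrightarrow>
             1 \<le> real (OPT N a L h) / real (num_winning N a h P \<sigma> ell))"
proof
  have apos: "\<forall>i\<in>N. 0 \<le> a i" using assms(4) by auto
  have opt: "0 < OPT N a L h" using OPT_pos[OF assms(1) apos assms(2,3,5)] .
  obtain W \<sigma>0 where W: "finite W" "card W = OPT N a L h" and "\<sigma>0 \<in> N \<rightarrow>\<^sub>E W" "winnable N a L h W \<sigma>0"
    using winnable_optimal_assignment[OF assms(1) apos assms(2,3,5)] .
  moreover have "W \<noteq> {}" using W opt by auto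
  ultimately obtain \<sigma> ell where NE: "is_NE N a L h W \<sigma> ell"
    using exists_NE_if_winnable[OF assms(1,2,4)] by metis
  then show "\<exists>P \<sigma> ell. is_NE N a L h P \<sigma> ell \<and> real (OPT N a L h) / real (num_winning N a h P \<sigma> ell) = 1"
    using num_winning_eq_card_if_NE[OF NE] W opt by (intro exI[of _ W] exI[of _ \<sigma>] exI[of _ ell]) simp
  show "\<forall>P \<sigma> ell. is_NE N a L h P \<sigma> ell \<longrightarrow> 1 \<le> real (OPT N a L h) / real (num_winning N a h P \<sigma> ell)"
  proof (intro allI impI)
    fix P \<sigma> ell assume NE: "is_NE N a L h P \<sigma> ell"
    then have v: "valid_partition N L P \<sigma> ell" unfolding is_NE_def by metis
    then have "0 < card P"
      using valid_partition_nonempty[OF v, of a] assms(2,5) unfolding valid_partition_def by auto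
    moreover have "card P \<le> OPT N a L h"
      using num_winning_le_OPT[OF v assms(1) apos assms(2)] num_winning_eq_card_if_NE[OF NE] by simp
    ultimately show "1 \<le> real (OPT N a L h) / real (num_winning N a h P \<sigma> ell)"
      using num_winning_eq_card_if_NE[OF NE] by simp
  qed
qed

end
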